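(* Let $p$ be an odd prime, let $x, y \in \mathbb{Z}$ satisfy $x^2 - 2 = y^p$ with $y \neq -1$, and let $a, b \in \mathbb{Z}$ satisfy $x + \sqrt{2} = (1+\sqrt{2})(a+b\sqrt{2})^p$. Then: (1) $v_p(a-1) = v_p(b)$; (2) if $p \mid b$ then $v_p(x-1) = v_p(b) + 1$, and otherwise $p \nmid (x-1)$; in particular either $p \nmid (x-1)$ or $p^2 \mid (x-1)$; (3) if $p \mid a$ then $v_p(x-2) = v_p(a) + 1$, and otherwise $p \nmid (x-2)$; in particular either $p \nmid (x-2)$ or $p^2 \mid (x-2)$.
   Context: $v_p$ denotes the $p$-adic valuation. *)

theory Defs
  imports Complex_Main "HOL-Computational_Algebra.Primes"
begin

end

theory Submission
  imports Defs "HOL-Computational_Algebra.Squarefree"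
begin

(* Work in the ring Z[sqrt 2]. As 1 + sqrt 2 has inverse sqrt 2 - 1, the hypothesis says
   (a + b sqrt 2)^p = U + V sqrt 2 with U = 2 - x and V = x - 1, so that U + V = 1.
   Modulo p the binomial theorem gives U == a^p == a and V == 2^((p-1)/2) b^p, hence
   p divides b iff it divides a - 1.  If p^m (m >= 1) is the largest power of p dividing
   both a - 1 and b, write a + b sqrt 2 = 1 + p^m e; then (1 + p^m e)^p == 1 + p^(m+1) e
   modulo p^(m+2), and U + V = 1 forces both coordinates of e to be prime to p.  This gives
   v_p(a - 1) = v_p(b) = m and v_p(x - 1) = m + 1.  Likewise, if p^v exactly divides a,
   expanding (b sqrt 2 + a)^p modulo p^(v+2) gives U == p 2^((p-1)/2) b^(p-1) a, whence
   v_p(x - 2) = v + 1. *)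

datatype zsqrt2 = ZSqrt2 (rat_part: int) (sqrt2_part: int)

instantiation zsqrt2 :: comm_ring_1
begin

definition "0 = ZSqrt2 0 0"
definition "1 = ZSqrt2 1 0"
definition "z + w = ZSqrt2 (rat_part z + rat_part w) (sqrt2_part z + sqrt2_part w)"
definition "- z = ZSqrt2 (- rat_part z) (- sqrt2_part z)"
definition "z - w = ZSqrt2 (rat_part z - rat_part w) (sqrt2_part z - sqrt2_part w)"
definition "z * w = ZSqrt2 (rat_part z * rat_part w + 2 * sqrt2_part z * sqrt2_part w)
                           (rat_part z * sqrt2_part w + sqrt2_part z * rat_part w)"

instance
  by standard (simp_all add: zero_zsqrt2_def one_zsqrt2_def plus_zsqrt2_def uminus_zsqrt2_def
      minus_zsqrt2_def times_zsqrt2_def algebra_simps)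

end

lemma ZSqrt2_zero [simp]: "ZSqrt2 0 0 = 0"
  and ZSqrt2_one [simp]: "ZSqrt2 1 0 = 1"
  and ZSqrt2_add [simp]: "ZSqrt2 u v + ZSqrt2 u' v' = ZSqrt2 (u + u') (v + v')"
  and ZSqrt2_diff [simp]: "ZSqrt2 u v - ZSqrt2 u' v' = ZSqrt2 (u - u') (v - v')"
  and ZSqrt2_mult [simp]: "ZSqrt2 u v * ZSqrt2 u' v' = ZSqrt2 (u * u' + 2 * v * v') (u * v' + v * u')"
  by (simp_all add: zero_zsqrt2_def one_zsqrt2_def plus_zsqrt2_def minus_zsqrt2_def times_zsqrt2_def)

lemma of_nat_zsqrt2: "of_nat n = ZSqrt2 (int n) 0"
  by (induction n) (simp_all flip: ZSqrt2_zero ZSqrt2_one)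

lemma ZSqrt2_int_power [simp]: "ZSqrt2 n 0 ^ k = ZSqrt2 (n ^ k) 0"
  by (induction k) simp_all

lemma ZSqrt2_sqrt2_power_even:
  assumes "even n"
  shows "ZSqrt2 0 v ^ n = ZSqrt2 (2 ^ (n div 2) * v ^ n) 0"
proof -
  obtain h where n: "n = 2 * h" using assms by (elim evenE)
  have "ZSqrt2 0 v ^ (2 * h) = ZSqrt2 (2 * v ^ 2) 0 ^ h"
    by (simp add: power_mult power2_eq_square mult.assoc)
  then show ?thesis
    by (simp add: n power_mult_distrib power_mult)
qed

lemma ZSqrt2_sqrt2_power_odd:
  assumes "odd n"
  shows "ZSqrt2 0 v ^ n = ZSqrt2 0 (2 ^ (n div 2) * v ^ n)"
proof -
  obtain h where n: "n = 2 * h + 1" using assms by (elim oddE)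
  have "ZSqrt2 0 v ^ n = ZSqrt2 0 v ^ (2 * h) * ZSqrt2 0 v"
    by (simp only: n power_add power_one_right)
  also have "\<dots> = ZSqrt2 (2 ^ h * v ^ (2 * h)) 0 * ZSqrt2 0 v"
    using ZSqrt2_sqrt2_power_even[of "2 * h" v] by simp
  finally show ?thesis
    by (simp add: n mult_ac)
qed

lemma ZSqrt2_int_dvd_iff: "ZSqrt2 n 0 dvd ZSqrt2 u v \<longleftrightarrow> n dvd u \<and> n dvd v"
proof
  assume "ZSqrt2 n 0 dvd ZSqrt2 u v"
  then obtain w where "ZSqrt2 u v = ZSqrt2 n 0 * w" by (elim dvdE)
  then show "n dvd u \<and> n dvd v" by (cases w) simp
next
  assume "n dvd u \<and> n dvd v"
  then obtain u' v' where "u = n * u'" "v = n * v'" by (auto elim!: dvdE)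
  then have "ZSqrt2 u v = ZSqrt2 n 0 * ZSqrt2 u' v'" by simp
  then show "ZSqrt2 n 0 dvd ZSqrt2 u v" by (rule dvdI)
qed

lemma square_eq_double_square_imp_zero:
  fixes n k :: int
  assumes "n ^ 2 = 2 * k ^ 2"
  shows "k = 0"
proof (rule ccontr)
  assume "k \<noteq> 0"
  with assms have "n \<noteq> 0" by auto
  have "2 * multiplicity 2 n = multiplicity (2::int) (n ^ 2)"
    using \<open>n \<noteq> 0\<close> by (simp add: prime_elem_multiplicity_power_distrib)
  also have "\<dots> = Suc (2 * multiplicity 2 k)"
    using \<open>k \<noteq> 0\<close> by (simp add: assms prime_elem_multiplicity_mult_distrib prime_elem_multiplicity_power_distrib)
  finally show False by presburger
qed

definition real_of_zsqrt2 :: "zsqrt2 \<Rightarrow> real" where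
  "real_of_zsqrt2 z = of_int (rat_part z) + of_int (sqrt2_part z) * sqrt 2"

lemma real_of_zsqrt2_ZSqrt2 [simp]: "real_of_zsqrt2 (ZSqrt2 u v) = of_int u + of_int v * sqrt 2"
  by (simp add: real_of_zsqrt2_def)

lemma real_of_zsqrt2_mult: "real_of_zsqrt2 (z * w) = real_of_zsqrt2 z * real_of_zsqrt2 w"
  by (cases z; cases w) (simp add: algebra_simps)

lemma real_of_zsqrt2_power: "real_of_zsqrt2 (z ^ n) = real_of_zsqrt2 z ^ n"
  by (induction n) (simp_all add: real_of_zsqrt2_mult flip: ZSqrt2_one)

lemma real_of_zsqrt2_inject: "real_of_zsqrt2 z = real_of_zsqrt2 w \<longleftrightarrow> z = w"
proof
  assume eq: "real_of_zsqrt2 z = real_of_zsqrt2 w"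
  obtain u v u' v' where z: "z = ZSqrt2 u v" and w: "w = ZSqrt2 u' v'" by (cases z, cases w)
  have "of_int (u - u') = of_int (v' - v) * sqrt 2"
    using eq by (simp add: z w algebra_simps)
  then have "of_int ((u - u') ^ 2) = (of_int (2 * (v' - v) ^ 2) :: real)"
    by (simp add: power_mult_distrib)
  then have "v' - v = 0"
    by (intro square_eq_double_square_imp_zero[of "u - u'"]) (simp only: of_int_eq_iff)
  then show "z = w" using eq by (simp add: z w)
qed simp

lemma prime_binomial_remainder_dvd:
  fixes c d :: "'a :: comm_ring_1"
  assumes "prime p"
  shows "of_nat p * d ^ 2 dvd (c + d) ^ p - (c ^ p + of_nat p * c ^ (p - 1) * d + d ^ p)"
proof -
  define f where "f k = of_nat (p choose k) * d ^ k * c ^ (p - k)" for k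
  have "2 \<le> p" using assms by (rule prime_ge_2_nat)
  then have "{..p} = {0, 1, p} \<union> {2..<p}" by auto
  moreover have "(c + d) ^ p = (\<Sum>k\<le>p. f k)"
    unfolding f_def by (subst add.commute) (rule binomial_ring)
  ultimately have "(c + d) ^ p = f 0 + f 1 + f p + (\<Sum>k\<in>{2..<p}. f k)"
    using \<open>2 \<le> p\<close> by (simp add: sum.union_disjoint)
  also have "f 0 + f 1 + f p = c ^ p + of_nat p * c ^ (p - 1) * d + d ^ p"
    by (simp add: f_def algebra_simps)
  finally have remainder: "(c + d) ^ p - (c ^ p + of_nat p * c ^ (p - 1) * d + d ^ p) = (\<Sum>k\<in>{2..<p}. f k)"
    by simp
  have "of_nat p * d ^ 2 dvd f k" if k: "k \<in> {2..<p}" for k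
  proof -
    obtain q where q: "p choose k = p * q"
      using dvd_choose_prime[of k p] k assms by (auto elim: dvdE)
    have "d ^ k = d ^ 2 * d ^ (k - 2)"
      using k by (metis atLeastLessThan_iff le_add_diff_inverse power_add)
    then have "f k = of_nat p * d ^ 2 * (of_nat q * d ^ (k - 2) * c ^ (p - k))"
      by (simp add: f_def q algebra_simps)
    then show ?thesis by simp
  qed
  then show ?thesis
    unfolding remainder by (rule dvd_sum)
qed

lemma prime_power_add_dvd:
  fixes c d :: "'a :: comm_ring_1"
  assumes "prime p"
  shows "of_nat p dvd (c + d) ^ p - (c ^ p + d ^ p)"
proof -
  have "(c + d) ^ p - (c ^ p + d ^ p)
      = ((c + d) ^ p - (c ^ p + of_nat p * c ^ (p - 1) * d + d ^ p)) + of_nat p * (c ^ (p - 1) * d)"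
    by (simp add: algebra_simps)
  then show ?thesis
    using prime_binomial_remainder_dvd[OF assms, of d c] by (metis dvd_add dvd_mult_left dvd_triv_left)
qed

lemma fermat_little_int:
  fixes a :: int
  assumes "prime p"
  shows "int p dvd a ^ p - a"
proof (induction a rule: int_induct[where k = 0])
  case base
  show ?case using prime_gt_0_nat[OF assms] by (simp add: power_0_left)
next
  case (step1 i)
  have "int p dvd (i + 1) ^ p - (i ^ p + 1)"
    using prime_power_add_dvd[OF assms, of i 1] by simp
  then have "int p dvd ((i + 1) ^ p - (i ^ p + 1)) + (i ^ p - i)"
    using step1.IH by (rule dvd_add)
  then show ?case by (simp add: algebra_simps)
next
  case (step2 i)
  have "int p dvd i ^ p - ((i - 1) ^ p + 1)"
    using prime_power_add_dvd[OF assms, of "i - 1" 1] by simp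
  with step2.IH have "int p dvd (i ^ p - i) - (i ^ p - ((i - 1) ^ p + 1))"
    by (rule dvd_diff)
  then show ?case by (simp add: algebra_simps)
qed

lemma prime_power_binomial_lift_dvd:
  fixes c e :: "'a :: comm_ring_1"
  assumes "prime p" "2 < p" "1 \<le> m"
  shows "of_nat p ^ (m + 2) dvd
           (c + of_nat p ^ m * e) ^ p - (c ^ p + of_nat p ^ (m + 1) * c ^ (p - 1) * e)"
proof -
  define d where "d = of_nat p ^ m * e"
  have "of_nat p ^ (m + 2) dvd (of_nat p ^ (2 * m + 1) :: 'a)"
    using \<open>1 \<le> m\<close> by (intro le_imp_power_dvd) simp
  moreover have "of_nat p * d ^ 2 = of_nat p ^ (2 * m + 1) * e ^ 2"
    by (simp add: d_def power_mult_distrib power_add power_mult mult_ac)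
  ultimately have "of_nat p ^ (m + 2) dvd of_nat p * d ^ 2"
    by simp
  then have remainder: "of_nat p ^ (m + 2) dvd
      (c + d) ^ p - (c ^ p + of_nat p * c ^ (p - 1) * d + d ^ p)"
    using prime_binomial_remainder_dvd[OF \<open>prime p\<close>] dvd_trans by blast
  have "m * 3 \<le> m * p"
    using assms(2) by (intro mult_le_mono2) simp
  then have "m + 2 \<le> m * p"
    using assms(3) by linarith
  then have "of_nat p ^ (m + 2) dvd (of_nat p ^ (m * p) :: 'a)"
    by (rule le_imp_power_dvd)
  then have last_term: "of_nat p ^ (m + 2) dvd d ^ p"
    by (simp add: d_def power_mult_distrib power_mult)
  have "(c + d) ^ p - (c ^ p + of_nat p ^ (m + 1) * c ^ (p - 1) * e)
      = ((c + d) ^ p - (c ^ p + of_nat p * c ^ (p - 1) * d + d ^ p)) + d ^ p"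
    by (simp add: d_def algebra_simps)
  with remainder last_term have "of_nat p ^ (m + 2) dvd
      (c + d) ^ p - (c ^ p + of_nat p ^ (m + 1) * c ^ (p - 1) * e)"
    by (metis dvd_add)
  then show ?thesis
    by (simp only: d_def)
qed

lemma multiplicity_eq_if_dvd_diff:
  fixes n t :: "'a :: {factorial_semiring, comm_ring_1}"
  assumes "prime p" "\<not> p dvd t" "p ^ Suc k dvd n - p ^ k * t"
  shows "multiplicity p n = k"
proof (rule multiplicity_eqI)
  have "p ^ k dvd p ^ Suc k" by (simp add: le_imp_power_dvd)
  then have "p ^ k dvd (n - p ^ k * t) + p ^ k * t"
    using assms(3) by (intro dvd_add) (auto intro: dvd_trans)
  then show "p ^ k dvd n" by simp
  show "\<not> p ^ Suc k dvd n"
  proof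
    assume "p ^ Suc k dvd n"
    then have "p ^ Suc k dvd n - (n - p ^ k * t)"
      using assms(3) by (rule dvd_diff)
    then have "p ^ k * p dvd p ^ k * t" by (simp add: mult.commute)
    then show False
      using assms(1,2) by (simp add: prime_elem_not_zeroI)
  qed
qed

locale zsqrt2_odd_prime_power =
  fixes p :: nat and a b U V :: int
  assumes prime: "prime p" and odd: "odd p"
    and power_eq: "ZSqrt2 a b ^ p = ZSqrt2 U V"
begin

lemma p_gt_2: "2 < p"
  using prime_ge_2_nat[OF prime] odd by (cases "p = 2") auto

lemma prime_int: "prime (int p)"
  using prime by simp

lemma not_unit_int: "\<not> is_unit (int p)"
  using prime_int not_prime_unit by blast

lemma not_dvd_two_power: "\<not> int p dvd 2 ^ n"
proof
  assume "int p dvd 2 ^ n"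
  then have "int p dvd 2"
    using prime_int prime_dvd_power by blast
  then show False
    using p_gt_2 by (auto dest: zdvd_imp_le)
qed

lemma sqrt2_power_p: "ZSqrt2 0 c ^ p = ZSqrt2 0 (2 ^ (p div 2) * c ^ p)"
  using odd by (rule ZSqrt2_sqrt2_power_odd)

lemma sqrt2_power_p_minus_1: "ZSqrt2 0 c ^ (p - 1) = ZSqrt2 (2 ^ (p div 2) * c ^ (p - 1)) 0"
proof -
  have "(p - 1) div 2 = p div 2"
    using odd by (elim oddE) simp
  then show ?thesis
    using odd by (simp add: ZSqrt2_sqrt2_power_even)
qed

lemma UV_cong_mod_prime: "int p dvd U - a ^ p" "int p dvd V - 2 ^ (p div 2) * b ^ p"
proof -
  have "of_nat p dvd (ZSqrt2 a 0 + ZSqrt2 0 b) ^ p - (ZSqrt2 a 0 ^ p + ZSqrt2 0 b ^ p)"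
    using prime by (rule prime_power_add_dvd)
  then have "ZSqrt2 (int p) 0 dvd ZSqrt2 (U - a ^ p) (V - 2 ^ (p div 2) * b ^ p)"
    using power_eq by (simp add: of_nat_zsqrt2 sqrt2_power_p)
  then show "int p dvd U - a ^ p" "int p dvd V - 2 ^ (p div 2) * b ^ p"
    by (simp_all add: ZSqrt2_int_dvd_iff)
qed

lemma dvd_U_iff: "int p dvd U \<longleftrightarrow> int p dvd a"
proof -
  have "int p dvd U \<longleftrightarrow> int p dvd a ^ p"
    using UV_cong_mod_prime(1) by (metis diff_add_cancel dvd_add_right_iff)
  also have "\<dots> \<longleftrightarrow> int p dvd a"
    using prime_int p_gt_2 by (simp add: prime_dvd_power_iff)
  finally show ?thesis .
qed

lemma dvd_V_iff: "int p dvd V \<longleftrightarrow> int p dvd b"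
proof -
  have "int p dvd V \<longleftrightarrow> int p dvd 2 ^ (p div 2) * b ^ p"
    using UV_cong_mod_prime(2) by (metis diff_add_cancel dvd_add_right_iff)
  also have "\<dots> \<longleftrightarrow> int p dvd b"
    using prime_int p_gt_2 not_dvd_two_power by (simp add: prime_dvd_mult_iff prime_dvd_power_iff)
  finally show ?thesis .
qed

lemma multiplicity_U_if_dvd_a:
  assumes "int p dvd a" "a \<noteq> 0" "\<not> int p dvd b"
  shows "multiplicity (int p) U = multiplicity (int p) a + 1"
proof -
  define v where "v = multiplicity (int p) a"
  define a' where "a' = a div int p ^ v"
  have a: "a = int p ^ v * a'"
    unfolding a'_def v_def by (simp add: multiplicity_dvd)
  have "\<not> int p dvd a'"
    unfolding a'_def v_def using assms(2) not_unit_int by (rule multiplicity_decompose)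
  have "1 \<le> v"
    using multiplicity_geI[OF assms(2) not_unit_int, of 1] assms(1) by (simp add: v_def)
  with prime p_gt_2 have "of_nat p ^ (v + 2) dvd (ZSqrt2 0 b + of_nat p ^ v * ZSqrt2 a' 0) ^ p
      - (ZSqrt2 0 b ^ p + of_nat p ^ (v + 1) * ZSqrt2 0 b ^ (p - 1) * ZSqrt2 a' 0)"
    by (rule prime_power_binomial_lift_dvd)
  moreover have "ZSqrt2 0 b + of_nat p ^ v * ZSqrt2 a' 0 = ZSqrt2 a b"
    by (simp add: of_nat_zsqrt2 a)
  ultimately have "of_nat p ^ (v + 2) dvd ZSqrt2 U V - (ZSqrt2 0 (2 ^ (p div 2) * b ^ p)
      + of_nat p ^ (v + 1) * ZSqrt2 (2 ^ (p div 2) * b ^ (p - 1)) 0 * ZSqrt2 a' 0)"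
    by (simp only: power_eq sqrt2_power_p sqrt2_power_p_minus_1)
  then have "int p ^ Suc (v + 1) dvd U - int p ^ (v + 1) * (2 ^ (p div 2) * b ^ (p - 1) * a')"
    by (simp add: of_nat_zsqrt2 ZSqrt2_int_dvd_iff mult_ac)
  moreover have "\<not> int p dvd 2 ^ (p div 2) * b ^ (p - 1) * a'"
    using assms(3) \<open>\<not> int p dvd a'\<close> not_dvd_two_power
      prime_dvd_power[OF prime_int] prime_dvd_mult_iff[OF prime_int] by metis
  ultimately show ?thesis
    using prime_int by (simp add: v_def multiplicity_eq_if_dvd_diff)
qed

lemma square_dvd_U:
  assumes "a \<noteq> 0" "\<not> int p dvd b" "int p dvd U"
  shows "int p ^ 2 dvd U"
proof -
  have "int p dvd a"
    using assms(3) dvd_U_iff by simp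
  then have "1 \<le> multiplicity (int p) a"
    using multiplicity_geI[OF assms(1) not_unit_int, of 1] by simp
  then have "2 \<le> multiplicity (int p) U"
    using multiplicity_U_if_dvd_a[OF \<open>int p dvd a\<close> assms(1,2)] by simp
  then show ?thesis
    by (rule multiplicity_dvd')
qed

end

locale zsqrt2_odd_prime_power_sum_one = zsqrt2_odd_prime_power +
  assumes sum_one: "U + V = 1"
begin

lemma dvd_b_iff: "int p dvd b \<longleftrightarrow> int p dvd a - 1"
proof -
  have "(a - 1) + 2 ^ (p div 2) * b ^ p = - ((a ^ p - a) + (U - a ^ p) + (V - 2 ^ (p div 2) * b ^ p))"
    using sum_one by (simp add: algebra_simps)
  moreover have "int p dvd (a ^ p - a) + (U - a ^ p) + (V - 2 ^ (p div 2) * b ^ p)"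
    using fermat_little_int[OF prime] UV_cong_mod_prime by (intro dvd_add)
  ultimately have "int p dvd (a - 1) + 2 ^ (p div 2) * b ^ p"
    by (metis dvd_minus_iff)
  then have "int p dvd a - 1 \<longleftrightarrow> int p dvd 2 ^ (p div 2) * b ^ p"
    by (metis dvd_add_left_iff dvd_add_right_iff)
  also have "\<dots> \<longleftrightarrow> int p dvd b"
    using prime_int p_gt_2 not_dvd_two_power by (simp add: prime_dvd_mult_iff prime_dvd_power_iff)
  finally show ?thesis ..
qed

lemma lift_common_prime_power:
  assumes "1 \<le> m" "a - 1 = int p ^ m * s" "b = int p ^ m * t"
  shows "int p dvd s + t" "int p ^ (m + 2) dvd V - int p ^ (m + 1) * t"
proof -
  from prime p_gt_2 assms(1)
  have "of_nat p ^ (m + 2) dvd (1 + of_nat p ^ m * ZSqrt2 s t) ^ p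
      - (1 ^ p + of_nat p ^ (m + 1) * 1 ^ (p - 1) * ZSqrt2 s t)"
    by (rule prime_power_binomial_lift_dvd)
  moreover have "1 + of_nat p ^ m * ZSqrt2 s t = ZSqrt2 a b"
    using assms(2,3) by (simp add: of_nat_zsqrt2 flip: ZSqrt2_one)
  ultimately have "ZSqrt2 (int p ^ (m + 2)) 0 dvd
      ZSqrt2 (U - (1 + int p ^ (m + 1) * s)) (V - int p ^ (m + 1) * t)"
    using power_eq by (simp add: of_nat_zsqrt2 flip: ZSqrt2_one)
  then have U: "int p ^ (m + 2) dvd U - (1 + int p ^ (m + 1) * s)"
    and V: "int p ^ (m + 2) dvd V - int p ^ (m + 1) * t"
    by (simp_all add: ZSqrt2_int_dvd_iff)
  from U V have "int p ^ (m + 2) dvd (U - (1 + int p ^ (m + 1) * s)) + (V - int p ^ (m + 1) * t)"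
    by (rule dvd_add)
  also have "(U - (1 + int p ^ (m + 1) * s)) + (V - int p ^ (m + 1) * t) = - (int p ^ (m + 1) * (s + t))"
    using sum_one by (simp add: algebra_simps)
  finally have "int p ^ (m + 1) * int p dvd int p ^ (m + 1) * (s + t)"
    by simp
  then show "int p dvd s + t"
    using prime_int by (simp add: prime_gt_0_int)
  show "int p ^ (m + 2) dvd V - int p ^ (m + 1) * t"
    by (fact V)
qed

lemma multiplicities_if_dvd_b:
  assumes "int p dvd b" "b \<noteq> 0"
  shows "multiplicity (int p) (a - 1) = multiplicity (int p) b"
    and "multiplicity (int p) V = multiplicity (int p) b + 1"
proof -
  define g where "g = gcd (a - 1) b"
  define m where "m = multiplicity (int p) g"
  have "g \<noteq> 0"
    using assms(2) by (simp add: g_def)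
  have "int p dvd g"
    using assms(1) dvd_b_iff by (simp add: g_def)
  then have "1 \<le> m"
    using multiplicity_geI[OF \<open>g \<noteq> 0\<close> not_unit_int, of 1] by (simp add: m_def)
  have "int p ^ m dvd g"
    by (simp add: m_def multiplicity_dvd)
  then obtain s t where s: "a - 1 = int p ^ m * s" and t: "b = int p ^ m * t"
    unfolding g_def by (meson dvd_gcdD1 dvd_gcdD2 dvdE)
  have "\<not> (int p dvd s \<and> int p dvd t)"
  proof
    assume "int p dvd s \<and> int p dvd t"
    then have "int p ^ Suc m dvd g"
      by (auto simp: g_def s t intro: mult_dvd_mono)
    then have "Suc m \<le> m"
      unfolding m_def by (rule multiplicity_geI[OF \<open>g \<noteq> 0\<close> not_unit_int])
    then show False by simp
  qed
  with lift_common_prime_power(1)[OF \<open>1 \<le> m\<close> s t]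
  have "\<not> int p dvd s" "\<not> int p dvd t"
    by (auto simp: dvd_add_right_iff dvd_add_left_iff)
  have "multiplicity (int p) (a - 1) = m" "multiplicity (int p) b = m"
    using prime_int \<open>\<not> int p dvd s\<close> \<open>\<not> int p dvd t\<close>
    by (simp_all add: s t multiplicity_eq_if_dvd_diff)
  moreover have "multiplicity (int p) V = m + 1"
    using prime_int \<open>\<not> int p dvd t\<close> lift_common_prime_power(2)[OF \<open>1 \<le> m\<close> s t]
    by (intro multiplicity_eq_if_dvd_diff) simp_all
  ultimately show "multiplicity (int p) (a - 1) = multiplicity (int p) b"
    and "multiplicity (int p) V = multiplicity (int p) b + 1"
    by simp_all
qed

lemma dvd_a_imp_not_dvd_b:
  assumes "int p dvd a"
  shows "\<not> int p dvd b"
proof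
  assume "int p dvd b"
  with assms have "int p dvd a - (a - 1)"
    using dvd_b_iff by (blast intro: dvd_diff)
  then show False
    using not_unit_int by simp
qed

lemma multiplicity_a_minus_1:
  assumes "b \<noteq> 0"
  shows "multiplicity (int p) (a - 1) = multiplicity (int p) b"
proof (cases "int p dvd b")
  case True
  then show ?thesis using assms by (rule multiplicities_if_dvd_b(1))
next
  case False
  then show ?thesis using dvd_b_iff by (simp add: not_dvd_imp_multiplicity_0)
qed

lemma square_dvd_V:
  assumes "b \<noteq> 0" "int p dvd V"
  shows "int p ^ 2 dvd V"
proof -
  have "int p dvd b"
    using assms(2) dvd_V_iff by simp
  then have "1 \<le> multiplicity (int p) b"
    using multiplicity_geI[OF assms(1) not_unit_int, of 1] by simp
  then have "2 \<le> multiplicity (int p) V"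
    using multiplicities_if_dvd_b(2)[OF \<open>int p dvd b\<close> assms(1)] by simp
  then show ?thesis
    by (rule multiplicity_dvd')
qed

end

lemma ZSqrt2_power_eq_of_real_eq:
  assumes "real_of_int x + sqrt 2 = (1 + sqrt 2) * (real_of_int a + real_of_int b * sqrt 2) ^ p"
  shows "ZSqrt2 a b ^ p = ZSqrt2 (2 - x) (x - 1)"
proof -
  have "real_of_zsqrt2 (ZSqrt2 x 1) = real_of_zsqrt2 (ZSqrt2 1 1 * ZSqrt2 a b ^ p)"
    using assms by (simp add: real_of_zsqrt2_mult real_of_zsqrt2_power)
  then have "ZSqrt2 x 1 = ZSqrt2 1 1 * ZSqrt2 a b ^ p"
    by (simp only: real_of_zsqrt2_inject)
  \<comment> \<open>multiply by the inverse \<open>sqrt 2 - 1\<close> of \<open>1 + sqrt 2\<close>\<close>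
  then have "ZSqrt2 (-1) 1 * ZSqrt2 x 1 = (ZSqrt2 (-1) 1 * ZSqrt2 1 1) * ZSqrt2 a b ^ p"
    by (simp only: mult.assoc)
  then show ?thesis
    by simp
qed

lemma int_power_eq_minus_one_imp:
  fixes y :: int
  assumes "y ^ n = -1"
  shows "y = -1"
proof -
  have "n \<noteq> 0"
    using assms by (rule contrapos_pn) simp
  have "\<bar>y\<bar> ^ n = 1 ^ n"
    using assms by (simp flip: power_abs)
  then have "\<bar>y\<bar> = 1"
    by (rule power_eq_imp_eq_base) (use \<open>n \<noteq> 0\<close> in auto)
  then show ?thesis
    using assms by (auto simp: abs_if split: if_splits)
qed

lemma int_power_neq_two:
  fixes y :: int
  assumes "2 \<le> n"
  shows "y ^ n \<noteq> 2"
proof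
  assume "y ^ n = 2"
  then have "y \<noteq> 0"
    using assms by (auto simp: power_0_left)
  then have "n * multiplicity 2 y = multiplicity (2 :: int) (y ^ n)"
    by (simp add: prime_elem_multiplicity_power_distrib)
  also have "\<dots> = 1"
    by (simp add: \<open>y ^ n = 2\<close>)
  finally show False
    using assms by simp
qed

theorem theorem7p6:
  fixes p :: nat and x y a b :: int
  assumes "prime p" and "odd p"
    and "x ^ 2 - 2 = y ^ p" and "y \<noteq> -1"
    and "real_of_int x + sqrt 2 = (1 + sqrt 2) * (real_of_int a + real_of_int b * sqrt 2) ^ p"
  shows "multiplicity (int p) (a - 1) = multiplicity (int p) b
     \<and> (int p dvd b \<longrightarrow> multiplicity (int p) (x - 1) = multiplicity (int p) b + 1)
     \<and> (\<not> int p dvd b \<longrightarrow> \<not> int p dvd (x - 1))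
     \<and> (\<not> int p dvd (x - 1) \<or> (int p) ^ 2 dvd (x - 1))
     \<and> (int p dvd a \<longrightarrow> multiplicity (int p) (x - 2) = multiplicity (int p) a + 1)
     \<and> (\<not> int p dvd a \<longrightarrow> \<not> int p dvd (x - 2))
     \<and> (\<not> int p dvd (x - 2) \<or> (int p) ^ 2 dvd (x - 2))"
proof -
  interpret zsqrt2_odd_prime_power_sum_one p a b "2 - x" "x - 1"
    using assms(1,2) ZSqrt2_power_eq_of_real_eq[OF assms(5)] by unfold_locales simp_all
  have "b \<noteq> 0"
  proof
    assume "b = 0"
    then have "x = 1"
      using power_eq by simp
    then show False
      using assms(3,4) int_power_eq_minus_one_imp by simp
  qed
  have "a \<noteq> 0"
  proof
    assume "a = 0"
    then have "x = 2"
      using power_eq by (simp add: sqrt2_power_p)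
    then show False
      using assms(3) int_power_neq_two[of p y] p_gt_2 by simp
  qed
  have "x - 2 = - (2 - x)"
    by simp
  then show ?thesis
    using \<open>a \<noteq> 0\<close> \<open>b \<noteq> 0\<close> multiplicity_a_minus_1 multiplicities_if_dvd_b(2) dvd_V_iff square_dvd_V
      multiplicity_U_if_dvd_a dvd_U_iff square_dvd_U dvd_a_imp_not_dvd_b
    by (simp only: dvd_minus_iff multiplicity_uminus_right) blast
qed

end
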